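(* Let $\mathcal{H}$ be an infinite dimensional complex Hilbert space and let $\phi:\mathcal{B}(\mathcal{H})\to\mathcal{B}(\mathcal{H})$ be a bijective map preserving the Douglas solution in both directions. Then $\phi$ preserves range inclusion in both directions: for all $A,B\in\mathcal{B}(\mathcal{H})$, $\operatorname{ran}A\subseteq\operatorname{ran}B$ if and only if $\operatorname{ran}\phi(A)\subseteq\operatorname{ran}\phi(B)$. Moreover, for every $B\in\mathcal{B}(\mathcal{H})$ of rank one, $\phi(B)$ is of rank one, and the assignment $\operatorname{ran}A\mapsto\operatorname{ran}\phi(A)$ is a well-defined map which restricts to a bijection of the set of one-dimensional subspaces $\{\mathbb{C}e: e\in\mathcal{H}, e\neq0\}$ onto itself.
   Context: $\mathcal{B}(\mathcal{H})$ denotes the algebra of all bounded linear operators on $\mathcal{H}$. For $A,B\in\mathcal{B}(\mathcal{H})$ with $\operatorname{ran}A\subseteq\operatorname{ran}B$, the Douglas solution of $A=BX$ is the unique $D\in\mathcal{B}(\mathcal{H})$ with $BD=A$ and $\operatorname{ran}D\subseteq(\ker B)^\perp$ (it exists exactly when $\operatorname{ran}A\subseteq\operatorname{ran}B$). A map $\phi:\mathcal{B}(\mathcal{H})\to\mathcal{B}(\mathcal{H})$ preserves the Douglas solution in both directions if for all $A,B,X\in\mathcal{B}(\mathcal{H})$: $X$ is the Douglas solution of $A=BX$ if and only if $\phi(X)$ is the Douglas solution of $\phi(A)=\phi(B)Y$. *)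

theory Defs
  imports "HOL-Analysis.Analysis"
begin

text \<open>The library only has real inner product spaces, so a
complex Hilbert space is encoded as a real Hilbert space (real inner product = real part
of the complex inner product, complete) together with a complex scalar multiplication
compatible with the real one, for which multiplication by i is isometric.\<close>

class complex_hilbert = real_inner + complete_space +
  fixes scaleC :: "complex \<Rightarrow> 'a \<Rightarrow> 'a"
  assumes scaleC_add_right: "scaleC a (x + y) = scaleC a x + scaleC a y"
    and scaleC_add_left: "scaleC (a + b) x = scaleC a x + scaleC b x"
    and scaleC_scaleC: "scaleC a (scaleC b x) = scaleC (a * b) x"
    and scaleC_one: "scaleC 1 x = x"
    and scaleC_of_real: "scaleC (complex_of_real r) x = scaleR r x"
    and inner_scaleC_ii: "inner (scaleC \<i> x) (scaleC \<i> y) = inner x y"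

definition cinner :: "'a::complex_hilbert \<Rightarrow> 'a \<Rightarrow> complex" where
  "cinner x y = Complex (inner x y) (inner (scaleC \<i> x) y)"

definition bop :: "('a::complex_hilbert \<Rightarrow> 'a) \<Rightarrow> bool" where
  "bop T \<longleftrightarrow> bounded_linear T \<and> (\<forall>c x. T (scaleC c x) = scaleC c (T x))"

definition BH :: "('a::complex_hilbert \<Rightarrow> 'a) set" where
  "BH = {T. bop T}"

definition ker :: "('a::complex_hilbert \<Rightarrow> 'a) \<Rightarrow> 'a set" where
  "ker T = {x. T x = 0}"

definition orth_compl :: "'a::complex_hilbert set \<Rightarrow> 'a set" where
  "orth_compl S = {y. \<forall>x\<in>S. cinner x y = 0}"

definition douglas_solution ::
  "('a::complex_hilbert \<Rightarrow> 'a) \<Rightarrow> ('a \<Rightarrow> 'a) \<Rightarrow> ('a \<Rightarrow> 'a) \<Rightarrow> bool" where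
  "douglas_solution A B D \<longleftrightarrow> bop D \<and> B \<circ> D = A \<and> range D \<subseteq> orth_compl (ker B)"

definition cline :: "'a::complex_hilbert \<Rightarrow> 'a set" where
  "cline e = {scaleC c e | c. True}"

definition lines :: "'a::complex_hilbert set set" where
  "lines = {cline e | e. e \<noteq> 0}"

definition rank_one :: "('a::complex_hilbert \<Rightarrow> 'a) \<Rightarrow> bool" where
  "rank_one T \<longleftrightarrow> range T \<in> lines"

text \<open>Infinite-dimensional (over R, equivalently over C).\<close>
definition infinite_dim :: "'a::complex_hilbert itself \<Rightarrow> bool" where
  "infinite_dim _ \<longleftrightarrow> \<not> (\<exists>S::'a set. finite S \<and> span S = UNIV)"

end

(*
  By Douglas' lemma, A = B X has a Douglas solution exactly when ran A \<subseteq> ran B; its proof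
  inverts B on the orthogonal complement of ker B and gets boundedness from the closed graph
  theorem. Hence phi and its inverse preserve range inclusion, so phi is an automorphism of the
  preorder ran A \<subseteq> ran B on B(H). The zero operators are its least elements and the rank-one
  operators its atoms, so rank one is preserved and ran A \<mapsto> ran phi(A) permutes the lines.
*)
theory Submission
  imports Defs
begin

context complex_hilbert
begin
subclass banach ..
end

lemma scaleC_zero_right [simp]: "scaleC c (0::'a::complex_hilbert) = 0"
  by (metis add_cancel_right_right scaleC_add_right)

lemma scaleC_zero_left [simp]: "scaleC 0 (x::'a::complex_hilbert) = 0"
  by (metis of_real_0 scaleC_of_real scale_zero_left)

lemma scaleC_scaleR_commute: "scaleC c (scaleR r (x::'a::complex_hilbert)) = scaleR r (scaleC c x)"
  by (metis mult.commute scaleC_of_real scaleC_scaleC)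

lemma scaleC_Re_Im: "scaleC c (x::'a::complex_hilbert) = scaleR (Re c) x + scaleR (Im c) (scaleC \<i> x)"
proof -
  have "c = complex_of_real (Re c) + \<i> * complex_of_real (Im c)"
    by (simp add: complex_eq_iff)
  then have "scaleC c x = scaleC (complex_of_real (Re c)) x + scaleC \<i> (scaleC (complex_of_real (Im c)) x)"
    by (metis scaleC_add_left scaleC_scaleC)
  then show ?thesis by (simp add: scaleC_of_real scaleC_scaleR_commute)
qed

lemma scaleC_ii_ii: "scaleC \<i> (scaleC \<i> (x::'a::complex_hilbert)) = - x"
proof -
  have "scaleC \<i> (scaleC \<i> x) = scaleC (complex_of_real (-1)) x" by (simp add: scaleC_scaleC)
  then show ?thesis by (simp only: scaleC_of_real) simp
qed

lemma inner_scaleC_ii_left: "inner (scaleC \<i> x) (y::'a::complex_hilbert) = - inner x (scaleC \<i> y)"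
  by (metis inner_minus_left inner_scaleC_ii scaleC_ii_ii)

lemma inner_scaleC_ii_self: "inner (scaleC \<i> x) (x::'a::complex_hilbert) = 0"
  by (metis inner_commute inner_scaleC_ii_left neg_equal_zero)

lemma cinner_scaleC_right: "cinner f (scaleC c u) = c * cinner f (u::'a::complex_hilbert)"
proof -
  have "inner f (scaleC \<i> u) = - inner (scaleC \<i> f) u"
    by (metis inner_commute inner_scaleC_ii_left)
  then show ?thesis
    unfolding cinner_def scaleC_Re_Im[of c u]
    by (simp add: inner_add_right inner_scaleC_ii complex_eq_iff algebra_simps)
qed

lemma cinner_self: "cinner f (f::'a::complex_hilbert) = complex_of_real (inner f f)"
  unfolding cinner_def by (simp add: inner_scaleC_ii_self complex_eq_iff)

lemma cinner_eq_0_iff: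
  "cinner x (y::'a::complex_hilbert) = 0 \<longleftrightarrow> inner x y = 0 \<and> inner (scaleC \<i> x) y = 0"
  unfolding cinner_def by (simp add: complex_eq_iff)

lemma mem_BH_iff: "T \<in> BH \<longleftrightarrow> bop T"
  unfolding BH_def by simp

lemma bop_bounded_linear: "bop T \<Longrightarrow> bounded_linear T"
  unfolding bop_def by blast

lemma bop_linear: "bop T \<Longrightarrow> linear T"
  using bop_bounded_linear bounded_linear.linear by blast

lemma bop_scaleC: "bop T \<Longrightarrow> T (scaleC c x) = scaleC c (T x)"
  unfolding bop_def by blast

lemma bop_zero: "bop T \<Longrightarrow> T 0 = 0"
  using bop_linear linear_0 by blast

lemma zero_in_BH: "(\<lambda>x::'a::complex_hilbert. 0) \<in> BH"
  unfolding mem_BH_iff bop_def by (simp add: bounded_linear_zero)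

definition rank_one_op :: "'a::complex_hilbert \<Rightarrow> 'a \<Rightarrow> 'a" where
  "rank_one_op f u = scaleC (cinner f u) f"

lemma rank_one_op_in_BH: "rank_one_op (f::'a::complex_hilbert) \<in> BH"
proof -
  have eq: "rank_one_op f = (\<lambda>u. scaleR (inner f u) f + scaleR (inner (scaleC \<i> f) u) (scaleC \<i> f))"
  proof
    fix u show "rank_one_op f u = scaleR (inner f u) f + scaleR (inner (scaleC \<i> f) u) (scaleC \<i> f)"
      unfolding rank_one_op_def scaleC_Re_Im[of "cinner f u" f] by (simp add: cinner_def)
  qed
  have "bounded_linear (rank_one_op f)" unfolding eq
    by (intro bounded_linear_add bounded_linear_compose[OF bounded_linear_scaleR_left]
        bounded_linear_inner_right)
  moreover have "rank_one_op f (scaleC c x) = scaleC c (rank_one_op f x)" for c x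
    by (simp add: rank_one_op_def cinner_scaleC_right scaleC_scaleC)
  ultimately show ?thesis unfolding mem_BH_iff bop_def by blast
qed

lemma range_rank_one_op:
  assumes "(f::'a::complex_hilbert) \<noteq> 0"
  shows "range (rank_one_op f) = cline f"
proof
  show "range (rank_one_op f) \<subseteq> cline f" unfolding cline_def rank_one_op_def by auto
  show "cline f \<subseteq> range (rank_one_op f)"
  proof
    fix y assume "y \<in> cline f"
    then obtain c where y: "y = scaleC c f" unfolding cline_def by auto
    have "rank_one_op f (scaleC (c / complex_of_real (inner f f)) f) = y"
      using assms by (simp add: rank_one_op_def cinner_scaleC_right cinner_self y)
    then show "y \<in> range (rank_one_op f)" by (metis rangeI)
  qed
qed

lemma lines_are_ranges: "L \<in> lines \<Longrightarrow> \<exists>R\<in>BH. range R = (L::'a::complex_hilbert set)"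
  unfolding lines_def using rank_one_op_in_BH range_rank_one_op by blast

section \<open>Orthogonal projection onto a closed subspace\<close>

lemma Cauchy_of_dist_sq_bound:
  fixes k :: "nat \<Rightarrow> 'a::metric_space"
  assumes close: "\<And>m n. (dist (k m) (k n))\<^sup>2 < 2 / (real m + 1) + 2 / (real n + 1)"
  shows "Cauchy k"
proof (rule metric_CauchyI)
  fix \<epsilon> :: real assume "\<epsilon> > 0"
  obtain N :: nat where "4 / \<epsilon>\<^sup>2 < real N"
    using reals_Archimedean2 by blast
  then have N: "4 / \<epsilon>\<^sup>2 < real N + 1" by linarith
  have "dist (k m) (k n) < \<epsilon>" if "m \<ge> N" "n \<ge> N" for m n
  proof -
    have "2 / (real m + 1) \<le> 2 / (real N + 1)" "2 / (real n + 1) \<le> 2 / (real N + 1)"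
      using that by (auto intro!: divide_left_mono)
    then have "(dist (k m) (k n))\<^sup>2 < 4 / (real N + 1)"
      using close[of m n] by linarith
    also have "\<dots> < \<epsilon>\<^sup>2"
      using N \<open>\<epsilon> > 0\<close> by (simp add: field_simps)
    finally show ?thesis
      using \<open>\<epsilon> > 0\<close> by (simp add: power_less_imp_less_base)
  qed
  then show "\<exists>N. \<forall>m\<ge>N. \<forall>n\<ge>N. dist (k m) (k n) < \<epsilon>" by blast
qed

lemma nearest_point_exists:
  fixes K :: "'a::{real_inner, complete_space} set"
  assumes "closed K" "convex K" "K \<noteq> {}"
  shows "\<exists>p\<in>K. \<forall>q\<in>K. norm (x - p) \<le> norm (x - q)"
proof -
  define D where "D = Inf ((\<lambda>k. (norm (x - k))\<^sup>2) ` K)"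
  have D_le: "D \<le> (norm (x - k))\<^sup>2" if "k \<in> K" for k
    unfolding D_def by (rule cInf_lower) (use that in \<open>auto intro: bdd_belowI[of _ 0]\<close>)
  define e where "e n = 1 / (real n + 1)" for n
  have "\<exists>k\<in>K. (norm (x - k))\<^sup>2 < D + e n" for n
    using cInf_lessD[of "(\<lambda>k. (norm (x - k))\<^sup>2) ` K" "D + e n"] assms(3)
    unfolding D_def[symmetric] e_def by (auto simp: add_pos_pos)
  then obtain k where kK: "\<And>n. k n \<in> K" and kD: "\<And>n. (norm (x - k n))\<^sup>2 < D + e n"
    by metis
  have k_close: "(dist (k m) (k n))\<^sup>2 < 2 * e m + 2 * e n" for m n
  proof -
    define c where "c = (1/2) *\<^sub>R k m + (1/2) *\<^sub>R k n"
    have "c \<in> K"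
      using convexD[OF assms(2) kK kK] unfolding c_def by simp
    moreover have "(x - k n) + (x - k m) = 2 *\<^sub>R (x - c)"
      unfolding c_def by (simp add: algebra_simps scaleR_2)
    ultimately have "4 * D \<le> (norm ((x - k n) + (x - k m)))\<^sup>2"
      using D_le[of c] by (simp add: power_mult_distrib)
    moreover have "(norm (k m - k n))\<^sup>2 + (norm ((x - k n) + (x - k m)))\<^sup>2
        = 2 * (norm (x - k n))\<^sup>2 + 2 * (norm (x - k m))\<^sup>2"
      by (simp add: power2_norm_eq_inner inner_diff inner_add inner_commute algebra_simps)
    ultimately show ?thesis unfolding dist_norm using kD[of m] kD[of n] by linarith
  qed
  have "Cauchy k"
  proof (rule Cauchy_of_dist_sq_bound)
    show "(dist (k m) (k n))\<^sup>2 < 2 / (real m + 1) + 2 / (real n + 1)" for m n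
      using k_close[of m n] by (simp add: e_def)
  qed
  then obtain p where kp: "k \<longlonglongrightarrow> p" using convergent_eq_Cauchy by blast
  have "p \<in> K" using assms(1) kK kp closed_sequentially by blast
  have "(\<lambda>n. (norm (x - k n))\<^sup>2) \<longlonglongrightarrow> (norm (x - p))\<^sup>2"
    by (intro tendsto_intros kp)
  moreover have "e \<longlonglongrightarrow> 0"
    using LIMSEQ_inverse_real_of_nat unfolding e_def by (simp add: inverse_eq_divide add.commute)
  then have "(\<lambda>n. D + e n) \<longlonglongrightarrow> D"
    using tendsto_add[OF tendsto_const] by fastforce
  ultimately have "(norm (x - p))\<^sup>2 \<le> D"
    using kD less_imp_le by (intro LIMSEQ_le[of _ _ "\<lambda>n. D + e n"]) blast+
  then show ?thesis
    using \<open>p \<in> K\<close> D_le by (meson order.trans norm_ge_zero power2_le_imp_le)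
qed

lemma nearest_point_subspace_orthogonal:
  fixes K :: "'a::real_inner set"
  assumes "subspace K" "p \<in> K" "q \<in> K"
    and nearest: "\<And>q. q \<in> K \<Longrightarrow> norm (x - p) \<le> norm (x - q)"
  shows "inner (x - p) q = 0"
proof (cases "q = 0")
  case False
  define a s where "a = inner (x - p) q" and "s = inner q q"
  have "s > 0" using False unfolding s_def by simp
  have "p + (a / s) *\<^sub>R q \<in> K"
    using assms(1-3) by (simp add: subspace_add subspace_scale)
  then have "(norm (x - p))\<^sup>2 \<le> (norm ((x - p) - (a / s) *\<^sub>R q))\<^sup>2"
    using nearest by (simp add: power_mono diff_diff_eq)
  also have "\<dots> = (norm (x - p))\<^sup>2 - 2 * (a / s) * a + (a / s)\<^sup>2 * s"
    unfolding power2_norm_eq_inner a_def s_def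
    by (simp add: inner_diff inner_commute power2_eq_square)
  also have "\<dots> = (norm (x - p))\<^sup>2 - a\<^sup>2 / s"
    using \<open>s > 0\<close> by (simp add: power2_eq_square field_simps)
  finally have "a\<^sup>2 / s \<le> 0" by simp
  then show ?thesis
    using \<open>s > 0\<close> unfolding a_def by (simp add: divide_le_0_iff)
qed simp

lemma orthogonal_decomposition_closed_subspace:
  fixes K :: "'a::{real_inner, complete_space} set"
  assumes "closed K" "subspace K"
  shows "\<exists>p\<in>K. \<forall>q\<in>K. inner (x - p) q = 0"
proof -
  obtain p where "p \<in> K" "\<And>q. q \<in> K \<Longrightarrow> norm (x - p) \<le> norm (x - q)"
    using nearest_point_exists[OF assms(1) subspace_imp_convex[OF assms(2)]] assms(2)
    by (metis empty_iff subspace_0)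
  then show ?thesis using nearest_point_subspace_orthogonal[OF assms(2)] by blast
qed

section \<open>Closed graph theorem\<close>

lemma Baire_sublevel_closure_interior:
  fixes g :: "'a::complete_space \<Rightarrow> real"
  shows "\<exists>n::nat. interior (closure {y. g y \<le> real n}) \<noteq> {}"
proof (rule ccontr)
  define F where "F n = closure {y. g y \<le> real n}" for n :: nat
  assume "\<not> (\<exists>n. interior (closure {y. g y \<le> real n}) \<noteq> {})"
  then have "interior (F n) = {}" for n unfolding F_def by blast
  have "euclidean interior_of \<Union>(range F) = {}"
  proof (rule Baire_category_alt)
    show "completely_metrizable_space (euclidean :: 'a topology) \<or>
        locally_compact_space (euclidean :: 'a topology) \<and> regular_space (euclidean :: 'a topology)"
      using completely_metrizable_space_euclidean by blast
    fix T assume "T \<in> range F"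
    then show "closedin euclidean T \<and> euclidean interior_of T = {}"
      using \<open>\<And>n. interior (F n) = {}\<close> unfolding F_def
      by (auto simp: euclidean_interior_of closed_closedin[symmetric])
  qed simp
  moreover have "y \<in> F (nat \<lceil>g y\<rceil>)" for y
    using closure_subset unfolding F_def by (fastforce intro: real_nat_ceiling_ge)
  then have "\<Union>(range F) = UNIV" by blast
  ultimately show False by (simp add: euclidean_interior_of)
qed

lemma linear_near_closure_sublevel:
  fixes C :: "'a::real_normed_vector \<Rightarrow> 'b::real_normed_vector"
  assumes "linear C" and ball: "ball y0 r \<subseteq> closure {y. norm (C y) \<le> N}"
    and "norm u < r" "\<epsilon> > 0"
  shows "\<exists>v. norm (u - v) < \<epsilon> \<and> norm (C v) \<le> 2 * N"
proof -
  have "r > 0" using assms(3) norm_ge_zero[of u] by linarith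
  then have "y0 + u \<in> closure {y. norm (C y) \<le> N}" "y0 \<in> closure {y. norm (C y) \<le> N}"
    using ball assms(3) by (auto simp: dist_norm)
  moreover have "\<epsilon> / 2 > 0" using assms(4) by simp
  ultimately obtain a b where a: "norm (C a) \<le> N" "dist a (y0 + u) < \<epsilon> / 2"
    and b: "norm (C b) \<le> N" "dist b y0 < \<epsilon> / 2"
    unfolding closure_approachable by blast
  have "norm (C (a - b)) \<le> 2 * N"
    using a b linear_diff[OF assms(1)] by (simp add: norm_triangle_le_diff)
  moreover have "u - (a - b) = (y0 + u - a) - (y0 - b)" by (simp add: algebra_simps)
  then have "norm (u - (a - b)) \<le> norm (y0 + u - a) + norm (y0 - b)"
    by (simp only: norm_triangle_ineq4)
  then have "norm (u - (a - b)) < \<epsilon>"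
    using a b by (simp add: dist_norm norm_minus_commute)
  ultimately show ?thesis by blast
qed

lemma linear_halving_approximation:
  fixes C :: "'a::banach \<Rightarrow> 'b::real_normed_vector"
  assumes "linear C"
  obtains M where "M \<ge> 0" "\<And>y. \<exists>y'. norm (y - y') \<le> norm y / 2 \<and> norm (C y') \<le> M * norm y"
proof -
  obtain N y0 where "y0 \<in> interior (closure {y. norm (C y) \<le> real N})"
    using Baire_sublevel_closure_interior[of "\<lambda>y. norm (C y)"] by blast
  then obtain r where "r > 0" and ball: "ball y0 r \<subseteq> closure {y. norm (C y) \<le> real N}"
    using mem_interior by blast
  define M where "M = 4 * real N / r"
  have "\<exists>y'. norm (y - y') \<le> norm y / 2 \<and> norm (C y') \<le> M * norm y" for y
  proof (cases "y = 0")
    case False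
    define t where "t = 2 * norm y / r"
    have "t > 0" using False \<open>r > 0\<close> unfolding t_def by simp
    have "norm ((1 / t) *\<^sub>R y) < r"
      using False \<open>r > 0\<close> unfolding t_def by simp
    then obtain v where v: "norm ((1 / t) *\<^sub>R y - v) < r / 4" and Cv: "norm (C v) \<le> 2 * real N"
      using linear_near_closure_sublevel[OF assms ball] \<open>r > 0\<close> by (metis divide_pos_pos zero_less_numeral)
    have "norm (y - t *\<^sub>R v) \<le> norm y / 2"
    proof -
      have "y - t *\<^sub>R v = t *\<^sub>R ((1 / t) *\<^sub>R y - v)"
        using \<open>t > 0\<close> by (simp add: scaleR_diff_right)
      then have "norm (y - t *\<^sub>R v) \<le> t * (r / 4)"
        using v \<open>t > 0\<close> by simp
      also have "t * (r / 4) = norm y / 2"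
        using \<open>r > 0\<close> unfolding t_def by simp
      finally show ?thesis .
    qed
    moreover have "norm (C (t *\<^sub>R v)) \<le> M * norm y"
    proof -
      have "norm (C (t *\<^sub>R v)) \<le> t * (2 * real N)"
        using Cv \<open>t > 0\<close> by (simp add: linear_scale[OF assms])
      also have "t * (2 * real N) = M * norm y"
        using \<open>r > 0\<close> unfolding t_def M_def by simp
      finally show ?thesis .
    qed
    ultimately show ?thesis by blast
  qed (simp add: linear_0[OF assms])
  moreover have "M \<ge> 0" unfolding M_def using \<open>r > 0\<close> by simp
  ultimately show ?thesis using that by blast
qed

lemma linear_closed_graph_imp_bounded:
  fixes C :: "'a::banach \<Rightarrow> 'b::banach"
  assumes "linear C"
    and closed_graph: "\<And>S y z. S \<longlonglongrightarrow> y \<Longrightarrow> (\<lambda>n. C (S n)) \<longlonglongrightarrow> z \<Longrightarrow> C y = z"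
  shows "bounded_linear C"
proof -
  obtain M where "M \<ge> 0" and "\<And>y. \<exists>y'. norm (y - y') \<le> norm y / 2 \<and> norm (C y') \<le> M * norm y"
    using linear_halving_approximation[OF assms(1)] by blast
  then obtain P where P_close: "\<And>y. norm (y - P y) \<le> norm y / 2"
    and P_bound: "\<And>y. norm (C (P y)) \<le> M * norm y"
    by metis
  have "norm (C y) \<le> norm y * (2 * M)" for y
  proof -
    txt \<open>The remainders R n tend to 0, so y is the sum of the corrections P (R n) and, by the
      closed graph, C y is the sum of the C (P (R n)).\<close>
    define R where "R n = ((\<lambda>u. u - P u) ^^ n) y" for n
    have R_Suc: "R (Suc n) = R n - P (R n)" for n unfolding R_def by simp
    have R_bound: "norm (R n) \<le> norm y * (1/2)^n" for n
    proof (induction n)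
      case (Suc n)
      then show ?case using P_close[of "R n"] unfolding R_Suc by simp
    qed (simp add: R_def)
    define g where "g n = M * norm y * (1/2)^n" for n
    have "summable g" unfolding g_def by (intro summable_mult summable_geometric) simp
    have CP_bound: "norm (C (P (R n))) \<le> g n" for n
      using P_bound[of "R n"] mult_left_mono[OF R_bound[of n] \<open>M \<ge> 0\<close>] unfolding g_def by simp
    have partial_sums: "(\<Sum>k<n. C (P (R k))) = C (y - R n)" for n
    proof (induction n)
      case (Suc n)
      have "y - R (Suc n) = (y - R n) + P (R n)" unfolding R_Suc by simp
      then have "C (y - R (Suc n)) = C (y - R n) + C (P (R n))"
        by (simp only: linear_add[OF assms(1)])
      with Suc show ?case by simp
    qed (simp add: R_def linear_0[OF assms(1)])
    have "R \<longlonglongrightarrow> 0"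
    proof (rule Lim_null_comparison)
      show "\<forall>\<^sub>F n in sequentially. norm (R n) \<le> norm y * (1/2)^n"
        by (intro always_eventually allI R_bound)
      show "(\<lambda>n. norm y * (1/2::real)^n) \<longlonglongrightarrow> 0"
        by (intro tendsto_mult_right_zero LIMSEQ_power_zero) simp
    qed
    then have "(\<lambda>n. y - R n) \<longlonglongrightarrow> y - 0"
      by (intro tendsto_intros)
    moreover have "summable (\<lambda>n. C (P (R n)))"
      by (rule summable_comparison_test'[OF \<open>summable g\<close> CP_bound])
    from summable_LIMSEQ[OF this] have "(\<lambda>n. C (y - R n)) \<longlonglongrightarrow> (\<Sum>n. C (P (R n)))"
      by (simp only: partial_sums)
    ultimately have "C y = (\<Sum>n. C (P (R n)))" by (intro closed_graph) simp_all
    then have "norm (C y) \<le> (\<Sum>n. g n)"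
      using norm_suminf_le[OF CP_bound \<open>summable g\<close>] by (simp only:)
    also have "(\<Sum>n. g n) = M * norm y * 2"
      unfolding g_def by (subst suminf_mult) (auto simp: suminf_geometric)
    finally show ?thesis by (simp add: algebra_simps)
  qed
  then show ?thesis
    by (rule bounded_linear_intro[OF linear_add[OF assms(1)] linear_scale[OF assms(1)]])
qed

section \<open>Douglas' lemma\<close>

lemma closed_ker: "bop B \<Longrightarrow> closed (ker B)"
  unfolding ker_def
  by (intro closed_Collect_eq linear_continuous_on bop_bounded_linear continuous_on_const)

lemma subspace_ker: "bop B \<Longrightarrow> subspace (ker B)"
  unfolding ker_def subspace_def
  by (auto simp: linear_0 linear_add linear_scale bop_linear)

lemma scaleC_mem_ker: "bop B \<Longrightarrow> x \<in> ker B \<Longrightarrow> scaleC c x \<in> ker B"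
  unfolding ker_def by (simp add: bop_scaleC)

lemma orth_compl_eq_real_orth:
  assumes "\<And>x. x \<in> S \<Longrightarrow> scaleC \<i> x \<in> S"
  shows "orth_compl S = {y. \<forall>x\<in>S. inner x y = 0}"
  unfolding orth_compl_def cinner_eq_0_iff using assms by auto

lemma scaleC_mem_orth_compl: "y \<in> orth_compl S \<Longrightarrow> scaleC c y \<in> orth_compl S"
  unfolding orth_compl_def by (simp add: cinner_scaleC_right)

lemma add_mem_orth_compl: "y \<in> orth_compl S \<Longrightarrow> z \<in> orth_compl S \<Longrightarrow> y + z \<in> orth_compl S"
  unfolding orth_compl_def cinner_eq_0_iff by (simp add: inner_add_right)

lemma diff_mem_orth_compl: "y \<in> orth_compl S \<Longrightarrow> z \<in> orth_compl S \<Longrightarrow> y - z \<in> orth_compl S"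
  using add_mem_orth_compl[of y S "scaleC (-1) z"] scaleC_mem_orth_compl[of z S "-1"]
  by (simp add: scaleC_of_real[of "-1", simplified])

lemma closed_orth_compl: "closed (orth_compl (S::'a::complex_hilbert set))"
proof -
  have "orth_compl S = (\<Inter>x\<in>S. {y. inner x y = 0} \<inter> {y. inner (scaleC \<i> x) y = 0})"
    unfolding orth_compl_def cinner_eq_0_iff by auto
  then show ?thesis
    by (simp add: closed_INT closed_Int closed_Collect_eq continuous_on_inner continuous_on_const
        continuous_on_id)
qed

lemma mem_orth_compl_self_imp_zero: "x \<in> S \<Longrightarrow> x \<in> orth_compl S \<Longrightarrow> x = 0"
  unfolding orth_compl_def by (metis (mono_tags) cinner_self inner_eq_zero_iff mem_Collect_eq of_real_eq_0_iff)

lemma ker_orth_compl_decomposition: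
  assumes "bop B"
  shows "\<exists>p\<in>ker B. x - p \<in> orth_compl (ker B)"
proof -
  obtain p where "p \<in> ker B" "\<forall>k\<in>ker B. inner (x - p) k = 0"
    using orthogonal_decomposition_closed_subspace[OF closed_ker subspace_ker, OF assms assms]
    by blast
  then show ?thesis
    using orth_compl_eq_real_orth[of "ker B"] scaleC_mem_ker[OF assms]
    by (auto simp: inner_commute)
qed

lemma ex1_preimage_in_orth_compl_ker:
  assumes "bop B" "y \<in> range B"
  shows "\<exists>!w. w \<in> orth_compl (ker B) \<and> B w = y"
proof -
  obtain x where "y = B x" using assms(2) by blast
  moreover obtain p where "p \<in> ker B" "x - p \<in> orth_compl (ker B)"
    using ker_orth_compl_decomposition[OF assms(1)] by blast
  ultimately have "x - p \<in> orth_compl (ker B) \<and> B (x - p) = y"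
    by (simp add: ker_def linear_diff[OF bop_linear[OF assms(1)]])
  moreover have "w = v"
    if "w \<in> orth_compl (ker B) \<and> B w = y" "v \<in> orth_compl (ker B) \<and> B v = y" for w v
  proof -
    have "w - v \<in> ker B" "w - v \<in> orth_compl (ker B)"
      using that by (auto simp: ker_def linear_diff[OF bop_linear[OF assms(1)]] diff_mem_orth_compl)
    then show "w = v" using mem_orth_compl_self_imp_zero by fastforce
  qed
  ultimately show ?thesis by blast
qed

lemma douglas_solution_exists:
  assumes A: "bop A" and B: "bop B" and "range A \<subseteq> range B"
  shows "\<exists>X. douglas_solution A B X"
proof -
  let ?K = "orth_compl (ker B)"
  have ex1: "\<exists>!w. w \<in> ?K \<and> B w = A y" for y
    using assms(3) by (intro ex1_preimage_in_orth_compl_ker[OF B]) blast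
  define C where "C y = (THE w. w \<in> ?K \<and> B w = A y)" for y
  have C: "C y \<in> ?K \<and> B (C y) = A y" for y
    unfolding C_def by (rule theI'[OF ex1])
  have C_eqI: "C y = w" if "w \<in> ?K" "B w = A y" for w y
    unfolding C_def by (rule the1_equality[OF ex1]) (use that in blast)
  have C_scaleC: "C (scaleC c y) = scaleC c (C y)" for c y
    by (rule C_eqI) (simp_all add: C scaleC_mem_orth_compl bop_scaleC[OF A] bop_scaleC[OF B])
  have C_add: "C (x + y) = C x + C y" for x y
    by (rule C_eqI)
      (simp_all add: C add_mem_orth_compl linear_add[OF bop_linear[OF A]] linear_add[OF bop_linear[OF B]])
  have "linear C"
  proof (rule linearI[OF C_add])
    show "C (r *\<^sub>R x) = r *\<^sub>R C x" for r x
      using C_scaleC[of "complex_of_real r"] by (simp only: scaleC_of_real)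
  qed
  moreover have "C y = z" if S: "S \<longlonglongrightarrow> y" and CS: "(\<lambda>n. C (S n)) \<longlonglongrightarrow> z" for S y z
  proof (rule C_eqI)
    show "z \<in> ?K"
      by (rule closed_sequentially[OF closed_orth_compl _ CS]) (simp add: C)
    have "(\<lambda>n. B (C (S n))) \<longlonglongrightarrow> B z"
      by (rule bounded_linear.tendsto[OF bop_bounded_linear[OF B] CS])
    moreover have "(\<lambda>n. B (C (S n))) \<longlonglongrightarrow> A y"
      unfolding C[THEN conjunct2] by (rule bounded_linear.tendsto[OF bop_bounded_linear[OF A] S])
    ultimately show "B z = A y" by (rule LIMSEQ_unique)
  qed
  ultimately have "bounded_linear C" by (rule linear_closed_graph_imp_bounded)
  then have "bop C" unfolding bop_def using C_scaleC by blast
  moreover have "B \<circ> C = A" using C by (simp add: fun_eq_iff)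
  moreover have "range C \<subseteq> ?K" using C by blast
  ultimately show ?thesis unfolding douglas_solution_def by blast
qed

lemma douglas_solution_range_subset: "douglas_solution A B X \<Longrightarrow> range A \<subseteq> range B"
  unfolding douglas_solution_def by auto

lemma douglas_preserver_range_subset_iff:
  fixes \<phi> :: "('a::complex_hilbert \<Rightarrow> 'a) \<Rightarrow> ('a \<Rightarrow> 'a)"
  assumes "\<phi> ` BH = BH"
    and douglas: "\<forall>A\<in>BH. \<forall>B\<in>BH. \<forall>X\<in>BH.
      douglas_solution A B X \<longleftrightarrow> douglas_solution (\<phi> A) (\<phi> B) (\<phi> X)"
    and "A \<in> BH" "B \<in> BH"
  shows "range (\<phi> A) \<subseteq> range (\<phi> B) \<longleftrightarrow> range A \<subseteq> range B"
proof
  assume "range (\<phi> A) \<subseteq> range (\<phi> B)"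
  then obtain Y where Y: "douglas_solution (\<phi> A) (\<phi> B) Y"
    using douglas_solution_exists assms(1,3,4) mem_BH_iff by blast
  then have "Y \<in> \<phi> ` BH"
    unfolding assms(1) douglas_solution_def mem_BH_iff by blast
  then obtain X where "X \<in> BH" "Y = \<phi> X" by blast
  then show "range A \<subseteq> range B"
    using Y douglas assms(3,4) douglas_solution_range_subset by blast
next
  assume "range A \<subseteq> range B"
  then obtain X where X: "douglas_solution A B X"
    using douglas_solution_exists assms(3,4) mem_BH_iff by blast
  then have "X \<in> BH" unfolding douglas_solution_def mem_BH_iff by blast
  then show "range (\<phi> A) \<subseteq> range (\<phi> B)"
    using X douglas assms(3,4) douglas_solution_range_subset by blast
qed

section \<open>Rank-one operators as atoms of range inclusion\<close>

definition is_atom :: "('b \<Rightarrow> 'b \<Rightarrow> bool) \<Rightarrow> 'b set \<Rightarrow> 'b \<Rightarrow> bool" where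
  "is_atom le S a \<longleftrightarrow> \<not> (\<forall>s\<in>S. le a s) \<and> (\<forall>s\<in>S. le s a \<longrightarrow> (\<forall>t\<in>S. le s t) \<or> le a s)"

lemma is_atom_image_iff:
  assumes "f ` S = S"
    and le: "\<And>a b. a \<in> S \<Longrightarrow> b \<in> S \<Longrightarrow> le (f a) (f b) \<longleftrightarrow> le a b"
    and "a \<in> S"
  shows "is_atom le S (f a) \<longleftrightarrow> is_atom le S a"
proof -
  have ball: "(\<forall>s\<in>S. P s) \<longleftrightarrow> (\<forall>s\<in>S. P (f s))" for P
  proof -
    have "(\<forall>s\<in>f ` S. P s) \<longleftrightarrow> (\<forall>s\<in>S. P (f s))" by blast
    then show ?thesis by (simp only: assms(1))
  qed
  have least: "(\<forall>s\<in>S. le (f b) s) \<longleftrightarrow> (\<forall>s\<in>S. le b s)" if "b \<in> S" for b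
    using ball[of "le (f b)"] le that by auto
  have "(\<forall>s\<in>S. le s (f a) \<longrightarrow> (\<forall>t\<in>S. le s t) \<or> le (f a) s)
      \<longleftrightarrow> (\<forall>s\<in>S. le (f s) (f a) \<longrightarrow> (\<forall>t\<in>S. le (f s) t) \<or> le (f a) (f s))"
    by (rule ball)
  also have "\<dots> \<longleftrightarrow> (\<forall>s\<in>S. le s a \<longrightarrow> (\<forall>t\<in>S. le s t) \<or> le a s)"
    using least le assms(3) by auto
  finally show ?thesis
    unfolding is_atom_def using least[OF assms(3)] by simp
qed

lemma range_eq_zero_iff_least:
  assumes "T \<in> BH"
  shows "range T = {0} \<longleftrightarrow> (\<forall>S\<in>BH. range T \<subseteq> range (S::'a::complex_hilbert \<Rightarrow> 'a))"
proof
  show "range T = {0} \<Longrightarrow> \<forall>S\<in>BH. range T \<subseteq> range S"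
    using bop_zero mem_BH_iff by (metis empty_subsetI insert_subset rangeI)
  assume "\<forall>S\<in>BH. range T \<subseteq> range S"
  then have "range T \<subseteq> range (\<lambda>x::'a. 0::'a)" using zero_in_BH by blast
  moreover have "0 \<in> range T" using assms bop_zero mem_BH_iff by (metis rangeI)
  ultimately show "range T = {0}" by auto
qed

lemma rank_one_iff_minimal_nonzero_range:
  fixes T :: "'a::complex_hilbert \<Rightarrow> 'a"
  assumes "bop T"
  shows "rank_one T \<longleftrightarrow>
    range T \<noteq> {0} \<and> (\<forall>S\<in>BH. range S \<subseteq> range T \<longrightarrow> range S = {0} \<or> range S = range T)"
proof
  assume "rank_one T"
  then obtain e where "e \<noteq> 0" and Te: "range T = cline e"
    unfolding rank_one_def lines_def by blast
  have "e \<in> cline e" unfolding cline_def by (metis (mono_tags) mem_Collect_eq scaleC_one)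
  show "range T \<noteq> {0} \<and> (\<forall>S\<in>BH. range S \<subseteq> range T \<longrightarrow> range S = {0} \<or> range S = range T)"
  proof (intro conjI ballI impI)
    show "range T \<noteq> {0}" using \<open>e \<in> cline e\<close> \<open>e \<noteq> 0\<close> Te by auto
    fix S assume "S \<in> BH" and sub: "range S \<subseteq> range T"
    show "range S = {0} \<or> range S = range T"
    proof (cases "range S = {0}")
      case False
      then obtain x where "S x \<noteq> 0" using \<open>S \<in> BH\<close> bop_zero mem_BH_iff by fastforce
      moreover have "S x \<in> cline e" using sub Te by auto
      ultimately obtain c where c: "S x = scaleC c e" unfolding cline_def by blast
      with \<open>S x \<noteq> 0\<close> have "c \<noteq> 0" by auto
      have "scaleC d e \<in> range S" for d
      proof -
        have "S (scaleC (d / c) x) = scaleC d e"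
          using bop_scaleC[of S] \<open>S \<in> BH\<close> c \<open>c \<noteq> 0\<close> by (simp add: mem_BH_iff scaleC_scaleC)
        then show ?thesis by (metis rangeI)
      qed
      then have "cline e \<subseteq> range S" unfolding cline_def by blast
      then show ?thesis using sub Te by auto
    qed simp
  qed
next
  assume minimal: "range T \<noteq> {0} \<and>
    (\<forall>S\<in>BH. range S \<subseteq> range T \<longrightarrow> range S = {0} \<or> range S = range T)"
  have "\<exists>x. T x \<noteq> 0"
  proof (rule ccontr)
    assume "\<nexists>x. T x \<noteq> 0"
    then have "range T = {0}" by auto
    with minimal show False by simp
  qed
  then obtain x where "T x \<noteq> 0" by blast
  have "scaleC c (T x) = T (scaleC c x)" for c
    using bop_scaleC[OF assms] by simp
  then have "range (rank_one_op (T x)) \<subseteq> range T"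
    unfolding range_rank_one_op[OF \<open>T x \<noteq> 0\<close>] cline_def by auto
  moreover have "T x \<in> range (rank_one_op (T x))"
    unfolding range_rank_one_op[OF \<open>T x \<noteq> 0\<close>] cline_def
    by (metis (mono_tags) mem_Collect_eq scaleC_one)
  then have "range (rank_one_op (T x)) \<noteq> {0}" using \<open>T x \<noteq> 0\<close> by auto
  ultimately have "range (rank_one_op (T x)) = range T"
    using minimal rank_one_op_in_BH by blast
  then show "rank_one T"
    unfolding rank_one_def lines_def using range_rank_one_op[OF \<open>T x \<noteq> 0\<close>] \<open>T x \<noteq> 0\<close> by auto
qed

lemma rank_one_iff_is_atom:
  assumes "T \<in> BH"
  shows "rank_one T \<longleftrightarrow> is_atom (\<lambda>A B. range A \<subseteq> range B) BH T"
proof -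
  have least: "(\<forall>S\<in>BH. range A \<subseteq> range S) \<longleftrightarrow> range A = {0}" if "A \<in> BH" for A
    using range_eq_zero_iff_least[OF that] by simp
  have "(\<forall>S\<in>BH. range S \<subseteq> range T \<longrightarrow> (\<forall>R\<in>BH. range S \<subseteq> range R) \<or> range T \<subseteq> range S)
    \<longleftrightarrow> (\<forall>S\<in>BH. range S \<subseteq> range T \<longrightarrow> range S = {0} \<or> range S = range T)"
    by (auto simp: least)
  then show ?thesis
    unfolding is_atom_def rank_one_iff_minimal_nonzero_range[OF assms[unfolded mem_BH_iff]]
    using least[OF assms] by simp
qed

lemma rank_one_image_iff:
  fixes \<phi> :: "('a::complex_hilbert \<Rightarrow> 'a) \<Rightarrow> ('a \<Rightarrow> 'a)"
  assumes img: "\<phi> ` BH = BH"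
    and le: "\<And>A B. A \<in> BH \<Longrightarrow> B \<in> BH \<Longrightarrow> range (\<phi> A) \<subseteq> range (\<phi> B) \<longleftrightarrow> range A \<subseteq> range B"
    and "A \<in> BH"
  shows "rank_one (\<phi> A) \<longleftrightarrow> rank_one A"
proof -
  have "\<phi> A \<in> BH" using img assms(3) by blast
  then show ?thesis
    using rank_one_iff_is_atom[of "\<phi> A"] rank_one_iff_is_atom[OF assms(3)]
      is_atom_image_iff[where le = "\<lambda>A B. range A \<subseteq> range B", OF img le assms(3)]
    by simp
qed

lemma factors_through:
  assumes "\<And>a b. a \<in> S \<Longrightarrow> b \<in> S \<Longrightarrow> g a = g b \<Longrightarrow> F a = F b"
  obtains \<psi> where "\<And>a. a \<in> S \<Longrightarrow> \<psi> (g a) = F a"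
proof
  fix a assume "a \<in> S"
  define a' where "a' = (SOME a'. a' \<in> S \<and> g a' = g a)"
  have "a' \<in> S \<and> g a' = g a"
    using someI_ex[of "\<lambda>a'. a' \<in> S \<and> g a' = g a"] \<open>a \<in> S\<close> unfolding a'_def by blast
  then have "F a' = F a"
    using assms[of a' a] \<open>a \<in> S\<close> by blast
  then show "F (SOME a'. a' \<in> S \<and> g a' = g a) = F a"
    unfolding a'_def .
qed

lemma range_map_bij_lines:
  fixes \<phi> :: "('a::complex_hilbert \<Rightarrow> 'a) \<Rightarrow> ('a \<Rightarrow> 'a)"
  assumes img: "\<phi> ` BH = BH"
    and le: "\<And>A B. A \<in> BH \<Longrightarrow> B \<in> BH \<Longrightarrow> range (\<phi> A) \<subseteq> range (\<phi> B) \<longleftrightarrow> range A \<subseteq> range B"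
  shows "\<exists>\<psi>. (\<forall>A\<in>BH. \<psi> (range A) = range (\<phi> A)) \<and> bij_betw \<psi> lines lines"
proof -
  have range_eq: "range (\<phi> A) = range (\<phi> B) \<longleftrightarrow> range A = range B" if "A \<in> BH" "B \<in> BH" for A B
    using le[OF that] le[OF that(2,1)] by blast
  obtain \<psi> where \<psi>: "\<And>A. A \<in> BH \<Longrightarrow> \<psi> (range A) = range (\<phi> A)"
    using factors_through[of BH range "\<lambda>A. range (\<phi> A)"] range_eq by metis
  have "inj_on \<psi> lines"
  proof (rule inj_onI)
    fix L L' assume "L \<in> lines" "L' \<in> lines" "\<psi> L = \<psi> L'"
    obtain A A' where A: "A \<in> BH" "range A = L" and A': "A' \<in> BH" "range A' = L'"
      using lines_are_ranges \<open>L \<in> lines\<close> \<open>L' \<in> lines\<close> by meson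
    have "range (\<phi> A) = range (\<phi> A')"
      using \<open>\<psi> L = \<psi> L'\<close> \<psi>[OF A(1)] \<psi>[OF A'(1)] A(2) A'(2) by simp
    then show "L = L'" using range_eq[OF A(1) A'(1)] A(2) A'(2) by simp
  qed
  moreover have "\<psi> ` lines = lines"
  proof
    show "\<psi> ` lines \<subseteq> lines"
    proof
      fix L' assume "L' \<in> \<psi> ` lines"
      then obtain L where "L \<in> lines" "L' = \<psi> L" by blast
      then obtain A where "A \<in> BH" "range A = L" using lines_are_ranges by blast
      then show "L' \<in> lines"
        using rank_one_image_iff[OF img le] \<psi> \<open>L \<in> lines\<close> \<open>L' = \<psi> L\<close>
        unfolding rank_one_def by auto
    qed
    show "lines \<subseteq> \<psi> ` lines"
    proof
      fix L :: "'a set" assume "L \<in> lines"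
      then obtain R where "R \<in> BH" "range R = L" using lines_are_ranges by blast
      then obtain A where "A \<in> BH" "range (\<phi> A) = L" using img by (metis imageE)
      then have "range A \<in> lines" "\<psi> (range A) = L"
        using rank_one_image_iff[OF img le] \<psi> \<open>L \<in> lines\<close> unfolding rank_one_def by auto
      then show "L \<in> \<psi> ` lines" by (metis image_eqI)
    qed
  qed
  ultimately show ?thesis using \<psi> unfolding bij_betw_def by blast
qed

theorem mainTheorem6:
  fixes \<phi> :: "('a::complex_hilbert \<Rightarrow> 'a) \<Rightarrow> ('a \<Rightarrow> 'a)"
  assumes "infinite_dim TYPE('a)"
    and "bij_betw \<phi> BH BH"
    and "\<forall>A\<in>BH. \<forall>B\<in>BH. \<forall>X\<in>BH.
           douglas_solution A B X \<longleftrightarrow> douglas_solution (\<phi> A) (\<phi> B) (\<phi> X)"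
  shows "(\<forall>A\<in>BH. \<forall>B\<in>BH. range A \<subseteq> range B \<longleftrightarrow> range (\<phi> A) \<subseteq> range (\<phi> B))
    \<and> (\<forall>B\<in>BH. rank_one B \<longrightarrow> rank_one (\<phi> B))
    \<and> (\<exists>\<psi>. (\<forall>A\<in>BH. \<psi> (range A) = range (\<phi> A)) \<and> bij_betw \<psi> lines lines)"
proof -
  have img: "\<phi> ` BH = BH" using assms(2) by (simp add: bij_betw_def)
  note le = douglas_preserver_range_subset_iff[OF img assms(3)]
  show ?thesis
    using le rank_one_image_iff[OF img le] range_map_bij_lines[OF img le] by blast
qed

end
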